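(* For every Gauss diagram $D$ consisting of $m>0$ signed dashed arrows (and no other arrows), there exist a fractional twist lattice $\Phi_D:\mathbb{Z}^m\to\mathscr{K}$, $\alpha\in(\mathbb{Z}_{\ge0})^m$ and $\nu\in\{+,-\}^m$ such that $I\big(\partial^{\nu\alpha}\Phi_D(\vec 0)\big)=(-1)^{\#(-)}\cdot D$, where $\#(-)$ is the number of arrows of $D$ signed $-$.
   Context: Gauss diagrams: a long virtual knot is encoded by the real line $\mathbb{R}$ with signed arrows, one for each classical crossing (arrow between the two preimages $x<y$, pointing right if the overcrossing is at $x$, left otherwise, labelled with the writhe sign); $\mathscr{D}$ is the set of such diagrams up to orientation-preserving homeomorphism of $\mathbb{R}$ and $\mathscr{K}$ the set of long virtual knots. A dashed arrow represents a semi-virtual crossing: a diagram with a dashed arrow equals the diagram with that arrow solid minus the diagram with that arrow deleted. $\mathscr{A}$ is the free abelian group generated by Gauss diagrams all of whose arrows are dashed, and $i$ makes every arrow dashed. $I:\mathbb{Z}[\mathscr{D}]\to\mathscr{A}$ is $I(D)=\sum_{D'\subset D} i(D')$, summing over all subdiagrams obtained by deleting a subset of arrows; it is an isomorphism and descends to $\mathbb{Z}[\mathscr{K}]\to\mathscr{P}$ ($\mathscr{P}$ the quotient of $\mathscr{A}$ by the Polyak relations); the equality is understood there. Discrete derivatives: for $\Phi:\mathbb{Z}^m\to\mathbb{Z}[\mathscr{K}]$, $(\partial_i^+\Phi)(z)=\Phi(z+e_i)-\Phi(z)$, $(\partial_i^-\Phi)(z)=\Phi(z)-\Phi(z-e_i)$;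 $\partial_i^{\pm a}$ is the $a$-fold iterate, $\partial^{\nu\alpha}=\partial_1^{\nu_1\alpha_1}\cdots\partial_m^{\nu_m\alpha_m}$. Fractional twist lattices: a proper pair is a pair of disjoint open intervals $A<A'$ of $\mathbb{R}$ such that every arrow with an endpoint in $A\cup A'$ has one endpoint in each. For $Y\in\{S,B\}$, $Z\in\{L,R\}$, a fractional twist sequence of type $FYZ$ with pair $(A,A')$ places at $k\in\mathbb{Z}$ exactly $|k|$ arrows with endpoints $a_1<\dots<a_{|k|}$ in $A$, $b_1<\dots<b_{|k|}$ in $A'$, arrow $i$ joining $a_i$ to $b_i$ ($Y=S$) or $b_{|k|+1-i}$ ($Y=B$), all pointing in direction $Z$ and signed $+$ if $k\ge0$, all pointing opposite to $Z$ and signed $-$ if $k<0$. A fractional twist lattice of dimension $m$ is $\Phi:\mathbb{Z}^m\to\mathscr{K}$ given by a fixed Gauss diagram $G$ and disjoint proper pairs $(A_i,A_i')$ free of endpoints of $G$, with $\Phi(k_1,\dots,k_m)$ equal to $G$ plus, in each $(A_i,A_i')$, the $k_i$-th configuration of a fractional twist sequence of some type $FYZ$. *)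

theory Defs
  imports Complex_Main "HOL-Library.Function_Algebras"
begin

text \<open>An arrow is (tail, head, sign) with endpoints on the real line;
  sign True means writhe +, False means writhe -.  The tail is the
  preimage of the overcrossing, the head that of the undercrossing.\<close>
type_synonym arrow = "real \<times> real \<times> bool"
type_synonym gd = "arrow set"

definition tl_of :: "arrow \<Rightarrow> real" where "tl_of a = fst a"
definition hd_of :: "arrow \<Rightarrow> real" where "hd_of a = fst (snd a)"
definition sg_of :: "arrow \<Rightarrow> bool" where "sg_of a = snd (snd a)"

definition ends :: "gd \<Rightarrow> real set" where
  "ends D = tl_of ` D \<union> hd_of ` D"

definition wf_gd :: "gd \<Rightarrow> bool" where
  "wf_gd D \<longleftrightarrow> finite D \<and> (\<forall>a\<in>D. tl_of a \<noteq> hd_of a) \<and>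
     (\<forall>a\<in>D. \<forall>b\<in>D. a \<noteq> b \<longrightarrow> {tl_of a, hd_of a} \<inter> {tl_of b, hd_of b} = {})"

text \<open>Equivalence up to orientation-preserving homeomorphism of the real line
  (= strictly increasing surjection).\<close>
definition gd_equiv :: "gd \<Rightarrow> gd \<Rightarrow> bool" where
  "gd_equiv D D' \<longleftrightarrow> (\<exists>h::real \<Rightarrow> real. strict_mono h \<and> surj h \<and>
      D' = (\<lambda>(t, x, s). (h t, h x, s)) ` D)"

definition no_ends_between :: "real set \<Rightarrow> real \<Rightarrow> real \<Rightarrow> bool" where
  "no_ends_between E x y \<longleftrightarrow> (\<forall>z\<in>E. \<not> (min x y < z \<and> z < max x y))"

definition reid1 :: "gd \<Rightarrow> gd \<Rightarrow> bool" where
  "reid1 D D' \<longleftrightarrow> wf_gd D' \<and> (\<exists>a. a \<notin> D \<and> D' = insert a D \<and>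
      no_ends_between (ends D) (tl_of a) (hd_of a))"

definition reid2 :: "gd \<Rightarrow> gd \<Rightarrow> bool" where
  "reid2 D D' \<longleftrightarrow> wf_gd D' \<and> (\<exists>a b. a \<notin> D \<and> b \<notin> D \<and> a \<noteq> b \<and> D' = D \<union> {a, b} \<and>
      sg_of a \<noteq> sg_of b \<and>
      no_ends_between (ends D') (tl_of a) (tl_of b) \<and>
      no_ends_between (ends D') (hd_of a) (hd_of b))"

definition pm :: "bool \<Rightarrow> int" where "pm b = (if b then 1 else -1)"
definition ordsg :: "real \<Rightarrow> real \<Rightarrow> int" where "ordsg x y = (if x < y then 1 else -1)"

text \<open>R3: three arrows TM = (p1,q1,e1), TB = (p2,q2,e2), MB = (p3,q3,e3)
  (top over middle over bottom), the endpoints lying pairwise adjacent on the three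
  strands; the move reverses the order of the endpoints on each strand.  The
  sign/order constraint is the realisability condition of the planar picture.\<close>
definition reid3 :: "gd \<Rightarrow> gd \<Rightarrow> bool" where
  "reid3 D D' \<longleftrightarrow> (\<exists>E p1 p2 p3 q1 q2 q3 e1 e2 e3.
      D = E \<union> {(p1, q1, e1), (p2, q2, e2), (p3, q3, e3)} \<and>
      D' = E \<union> {(p2, p3, e1), (p1, q3, e2), (q1, q2, e3)} \<and>
      wf_gd D \<and> wf_gd D' \<and> distinct [p1, p2, p3, q1, q2, q3] \<and>
      ends E \<inter> {p1, p2, p3, q1, q2, q3} = {} \<and>
      no_ends_between (ends D) p1 p2 \<and> no_ends_between (ends D) q1 p3 \<and>
      no_ends_between (ends D) q2 q3 \<and>
      ordsg p1 p2 * ordsg q1 p3 = pm e3 * pm e2 \<and>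
      ordsg q2 q3 * ordsg q1 p3 = pm e1 * pm e2)"

definition reid :: "gd \<Rightarrow> gd \<Rightarrow> bool" where
  "reid D D' \<longleftrightarrow> reid1 D D' \<or> reid2 D D' \<or> reid3 D D'"

text \<open>Elements of the free abelian group on diagram representatives:
  finitely supported functions gd => int.  The same carrier is used for the
  group A of dashed diagrams (i only relabels arrows as dashed).\<close>
definition gen :: "gd \<Rightarrow> gd \<Rightarrow> int" where
  "gen D = (\<lambda>E. if E = D then 1 else 0)"

definition Imap :: "(gd \<Rightarrow> int) \<Rightarrow> (gd \<Rightarrow> int)" where
  "Imap f = (\<lambda>E. \<Sum>D\<in>{D. f D \<noteq> 0}. if E \<subseteq> D then f D else 0)"

text \<open>Relations defining P: identification of homeomorphic diagrams (passing from
  representatives to the free group on the set of diagrams) and the images under I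
  of Reidemeister moves (the Polyak relations, through which I descends to Z[K] -> P).\<close>
inductive_set prel :: "(gd \<Rightarrow> int) set" where
  homeo: "wf_gd D \<Longrightarrow> gd_equiv D D' \<Longrightarrow> gen D - gen D' \<in> prel"
| reidm: "reid D D' \<Longrightarrow> Imap (gen D) - Imap (gen D') \<in> prel"
| zero: "0 \<in> prel"
| add: "f \<in> prel \<Longrightarrow> g \<in> prel \<Longrightarrow> f + g \<in> prel"
| neg: "f \<in> prel \<Longrightarrow> - f \<in> prel"

definition polyak_eq :: "(gd \<Rightarrow> int) \<Rightarrow> (gd \<Rightarrow> int) \<Rightarrow> bool" where
  "polyak_eq f g \<longleftrightarrow> f - g \<in> prel"

section \<open>Discrete derivatives on Z^m (vectors as nat => int, coordinates i < m)\<close>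

definition dstep :: "nat \<Rightarrow> bool \<Rightarrow> ((nat \<Rightarrow> int) \<Rightarrow> (gd \<Rightarrow> int)) \<Rightarrow> ((nat \<Rightarrow> int) \<Rightarrow> (gd \<Rightarrow> int))" where
  "dstep i pos F = (if pos then (\<lambda>z. F (z(i := z i + 1)) - F z)
                            else (\<lambda>z. F z - F (z(i := z i - 1))))"

fun dpart :: "nat \<Rightarrow> (nat \<Rightarrow> bool) \<Rightarrow> (nat \<Rightarrow> nat) \<Rightarrow>
      ((nat \<Rightarrow> int) \<Rightarrow> (gd \<Rightarrow> int)) \<Rightarrow> ((nat \<Rightarrow> int) \<Rightarrow> (gd \<Rightarrow> int))" where
  "dpart 0 nu alpha F = F"
| "dpart (Suc i) nu alpha F = (dstep i (nu i) ^^ alpha i) (dpart i nu alpha F)"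

text \<open>A pair (A, A') of open intervals is given as (l, r, l', r'), A = ]l,r[, A' = ]l',r'[.\<close>
definition pairset :: "real \<times> real \<times> real \<times> real \<Rightarrow> real set" where
  "pairset P = (case P of (l, r, l', r') \<Rightarrow> {l<..<r} \<union> {l'<..<r'})"

text \<open>Y = True means S, False means B; Z = True means R (right), False means L.\<close>
definition twist_config :: "bool \<Rightarrow> bool \<Rightarrow> real \<times> real \<times> real \<times> real \<Rightarrow> int \<Rightarrow> gd \<Rightarrow> bool" where
  "twist_config Y Z P k C \<longleftrightarrow> (case P of (l, r, l', r') \<Rightarrow>
     (\<exists>a b :: nat \<Rightarrow> real.
        strict_mono_on {..<nat \<bar>k\<bar>} a \<and> strict_mono_on {..<nat \<bar>k\<bar>} b \<and>
        (\<forall>j < nat \<bar>k\<bar>. a j \<in> {l<..<r} \<and> b j \<in> {l'<..<r'}) \<and>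
        C = (\<lambda>j. let bj = b (if Y then j else nat \<bar>k\<bar> - 1 - j);
                     right = (if k \<ge> 0 then Z else \<not> Z)
                 in if right then (a j, bj, k \<ge> 0) else (bj, a j, k \<ge> 0)) ` {..<nat \<bar>k\<bar>}))"

definition is_ftl :: "nat \<Rightarrow> ((nat \<Rightarrow> int) \<Rightarrow> gd) \<Rightarrow> bool" where
  "is_ftl m Phi \<longleftrightarrow> (\<exists>G (P :: nat \<Rightarrow> real \<times> real \<times> real \<times> real) Y Z.
     wf_gd G \<and>
     (\<forall>i<m. case P i of (l, r, l', r') \<Rightarrow> l < r \<and> r \<le> l' \<and> l' < r') \<and>
     (\<forall>i<m. \<forall>j<m. i \<noteq> j \<longrightarrow> pairset (P i) \<inter> pairset (P j) = {}) \<and>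
     (\<forall>i<m. ends G \<inter> pairset (P i) = {}) \<and>
     (\<forall>k. \<exists>C. (\<forall>i<m. twist_config (Y i) (Z i) (P i) (k i) (C i)) \<and>
             Phi k = G \<union> (\<Union>i<m. C i)))"

end

theory Submission
  imports Defs
begin

text \<open>Place around the two endpoints of each arrow c of D a proper pair of small intervals
  carrying a twist sequence whose configuration at the sign of c (as \<open>\<pm>1\<close>) is c itself.
  At \<open>z = 0\<close> every coordinate of the resulting lattice is empty, so taking in each coordinate
  the one-step derivative in the direction of the sign of c produces, under I, an
  inclusion--exclusion sum which collapses to the indicator of the subdiagrams containing D
  and contained in D, i.e. to D, with one factor \<open>-1\<close> for each backward difference.
  The identity already holds in the free group, before passing to the Polyak quotient.\<close>

lemma Imap_eq_sum_superset:
  assumes "finite S" "{D. f D \<noteq> 0} \<subseteq> S"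
  shows "Imap f E = (\<Sum>D\<in>S. if E \<subseteq> D then f D else 0)"
  unfolding Imap_def by (rule sum.mono_neutral_left[OF assms]) auto

lemma Imap_scaled_diff:
  assumes "finite {D. f D \<noteq> 0}" "finite {D. g D \<noteq> 0}"
  shows "Imap (\<lambda>D. c * (f D - g D)) = (\<lambda>E. c * (Imap f E - Imap g E))"
proof
  fix E
  let ?S = "{D. f D \<noteq> 0} \<union> {D. g D \<noteq> 0}"
  have fin: "finite ?S" using assms by simp
  have "Imap (\<lambda>D. c * (f D - g D)) E = (\<Sum>D\<in>?S. if E \<subseteq> D then c * (f D - g D) else 0)"
    by (rule Imap_eq_sum_superset[OF fin]) auto
  also have "\<dots> = (\<Sum>D\<in>?S. c * ((if E \<subseteq> D then f D else 0) - (if E \<subseteq> D then g D else 0)))"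
    by (rule sum.cong) auto
  also have "\<dots> = c * ((\<Sum>D\<in>?S. if E \<subseteq> D then f D else 0) - (\<Sum>D\<in>?S. if E \<subseteq> D then g D else 0))"
    by (simp add: sum_distrib_left[symmetric] sum_subtractf)
  also have "\<dots> = c * (Imap f E - Imap g E)"
    using Imap_eq_sum_superset[OF fin, of f E] Imap_eq_sum_superset[OF fin, of g E] by simp
  finally show "Imap (\<lambda>D. c * (f D - g D)) E = c * (Imap f E - Imap g E)" .
qed

definition interval_indicator :: "gd \<Rightarrow> gd \<Rightarrow> gd \<Rightarrow> int" where
  "interval_indicator L U E = (if L \<subseteq> E \<and> E \<subseteq> U then 1 else 0)"

lemma Imap_gen: "Imap (gen X) = interval_indicator {} X"
proof
  fix E
  have "Imap (gen X) E = (\<Sum>D\<in>{X}. if E \<subseteq> D then gen X D else 0)"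
    by (rule Imap_eq_sum_superset) (auto simp: gen_def)
  then show "Imap (gen X) E = interval_indicator {} X E"
    by (simp add: gen_def interval_indicator_def)
qed

lemma interval_indicator_insert_diff:
  assumes "a \<notin> U"
  shows "interval_indicator L (insert a U) E - interval_indicator L U E
       = interval_indicator (insert a L) (insert a U) E"
  using assms by (cases "a \<in> E") (auto simp: interval_indicator_def)

lemma interval_indicator_self: "interval_indicator X X = gen X"
  by (auto simp: interval_indicator_def gen_def)

lemma finite_support_dstep:
  assumes "\<And>z. finite {E. F z E \<noteq> 0}"
  shows "finite {E. dstep i b F z E \<noteq> 0}"
proof -
  have "finite {E. F u E \<noteq> F v E}" for u v
    by (rule finite_subset[OF _ finite_UnI[OF assms[of u] assms[of v]]]) auto
  then show ?thesis by (simp add: dstep_def)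
qed

lemma finite_support_dstep_funpow:
  assumes "\<And>z. finite {E. F z E \<noteq> 0}"
  shows "finite {E. (dstep i b ^^ k) F z E \<noteq> 0}"
  by (induction k arbitrary: z) (auto simp: assms intro: finite_support_dstep)

lemma finite_support_dpart:
  assumes "\<And>z. finite {E. F z E \<noteq> 0}"
  shows "finite {E. dpart n nu alpha F z E \<noteq> 0}"
  by (induction n arbitrary: z) (simp_all add: assms finite_support_dstep_funpow)

lemma dstep_at_zero:
  assumes "z i = 0"
  shows "dstep i b F z = (\<lambda>E. pm b * (F (z(i := pm b)) E - F z E))"
  using assms by (cases b) (auto simp: dstep_def pm_def fun_eq_iff)

text \<open>Each derivative adds the arrow \<open>d n\<close> to the lower end of the interval of
  subdiagrams (\<open>interval_indicator_insert_diff\<close>); after m steps both ends are \<open>d ` {..<m}\<close>.\<close>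

lemma Imap_dpart_unit_steps_partial:
  fixes C :: "nat \<Rightarrow> int \<Rightarrow> gd" and d :: "nat \<Rightarrow> arrow"
  assumes zero: "\<And>i. C i 0 = {}"
    and unit: "\<And>i. i < m \<Longrightarrow> C i (pm (nu i)) = {d i}"
    and apart: "\<And>i j k. i < m \<Longrightarrow> j < m \<Longrightarrow> i \<noteq> j \<Longrightarrow> d i \<notin> C j k"
    and "n \<le> m" "\<forall>i<n. z i = 0"
  shows "Imap (dpart n nu (\<lambda>_. 1) (\<lambda>z. gen (\<Union>i<m. C i (z i))) z)
       = (\<lambda>E. (\<Prod>i<n. pm (nu i)) *
            interval_indicator (d ` {..<n}) (d ` {..<n} \<union> (\<Union>i\<in>{n..<m}. C i (z i))) E)"
  using \<open>n \<le> m\<close> \<open>\<forall>i<n. z i = 0\<close>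
proof (induction n arbitrary: z)
  case 0
  then show ?case by (simp add: Imap_gen atLeast0LessThan)
next
  case (Suc n)
  let ?A = "dpart n nu (\<lambda>_. 1) (\<lambda>z. gen (\<Union>i<m. C i (z i)))"
  let ?z' = "z(n := pm (nu n))"
  let ?R = "\<Union>i\<in>{Suc n..<m}. C i (z i)"
  let ?L = "d ` {..<n}"
  have nm: "n < m" using Suc.prems by simp
  have split: "(\<Union>i\<in>{n..<m}. C i (w i)) = C n (w n) \<union> (\<Union>i\<in>{Suc n..<m}. C i (w i))" for w
  proof -
    have "{n..<m} = insert n {Suc n..<m}" using nm by auto
    then show ?thesis by simp
  qed
  have R_z: "(\<Union>i\<in>{n..<m}. C i (z i)) = ?R"
    using split[of z] Suc.prems zero by simp
  have R_z': "(\<Union>i\<in>{n..<m}. C i (?z' i)) = insert (d n) ?R"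
    using split[of ?z'] unit[OF nm] by simp
  have fresh: "d n \<notin> ?L \<union> ?R"
  proof -
    have "d n \<notin> C j k" if "j < m" "j \<noteq> n" for j k
      using apart[OF nm that(1)] that(2) by auto
    moreover have "d n \<noteq> d j" if "j < n" for j
      using apart[OF nm, of j "pm (nu j)"] unit[of j] that nm by auto
    ultimately show ?thesis by auto
  qed
  have fin: "finite {E. ?A w E \<noteq> 0}" for w
    by (rule finite_support_dpart) (simp add: gen_def)
  have "Imap (dpart (Suc n) nu (\<lambda>_. 1) (\<lambda>z. gen (\<Union>i<m. C i (z i))) z)
      = Imap (\<lambda>E. pm (nu n) * (?A ?z' E - ?A z E))"
    using Suc.prems by (simp add: dstep_at_zero)
  also have "\<dots> = (\<lambda>E. pm (nu n) * (Imap (?A ?z') E - Imap (?A z) E))"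
    by (rule Imap_scaled_diff[OF fin fin])
  also have "\<dots> = (\<lambda>E. (\<Prod>i<Suc n. pm (nu i)) *
      (interval_indicator ?L (insert (d n) (?L \<union> ?R)) E - interval_indicator ?L (?L \<union> ?R) E))"
  proof -
    have "\<forall>i<n. ?z' i = 0" "\<forall>i<n. z i = 0" "n \<le> m" using Suc.prems by auto
    note IH = Suc.IH[OF \<open>n \<le> m\<close> this(1), unfolded R_z']
      Suc.IH[OF \<open>n \<le> m\<close> this(2), unfolded R_z]
    show ?thesis unfolding IH by (simp add: algebra_simps)
  qed
  also have "\<dots> = (\<lambda>E. (\<Prod>i<Suc n. pm (nu i)) *
      interval_indicator (d ` {..<Suc n}) (d ` {..<Suc n} \<union> ?R) E)"
    by (simp add: interval_indicator_insert_diff[OF fresh] lessThan_Suc)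
  finally show ?case .
qed

lemma Imap_dpart_unit_steps:
  fixes C :: "nat \<Rightarrow> int \<Rightarrow> gd" and d :: "nat \<Rightarrow> arrow"
  assumes "\<And>i. C i 0 = {}"
    and "\<And>i. i < m \<Longrightarrow> C i (pm (nu i)) = {d i}"
    and "\<And>i j k. i < m \<Longrightarrow> j < m \<Longrightarrow> i \<noteq> j \<Longrightarrow> d i \<notin> C j k"
  shows "Imap (dpart m nu (\<lambda>_. 1) (\<lambda>z. gen (\<Union>i<m. C i (z i))) (\<lambda>_. 0))
       = (\<lambda>E. (\<Prod>i<m. pm (nu i)) * gen (d ` {..<m}) E)"
proof -
  have "Imap (dpart m nu (\<lambda>_. 1) (\<lambda>z. gen (\<Union>i<m. C i (z i))) (\<lambda>_. 0))
      = (\<lambda>E. (\<Prod>i<m. pm (nu i)) *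
           interval_indicator (d ` {..<m}) (d ` {..<m} \<union> (\<Union>i\<in>{m..<m}. C i 0)) E)"
    by (rule Imap_dpart_unit_steps_partial) (use assms in auto)
  then show ?thesis by (simp add: interval_indicator_self)
qed

lemma prod_pm_eq_power:
  assumes "finite A"
  shows "(\<Prod>a\<in>A. pm (P a)) = (-1) ^ card {a\<in>A. \<not> P a}"
proof -
  have "A \<inter> - {a. P a} = {a\<in>A. \<not> P a}" by blast
  then show ?thesis
    by (simp add: pm_def prod.If_cases[OF assms])
qed

definition twist_offset :: "real \<Rightarrow> nat \<Rightarrow> real" where
  "twist_offset \<delta> j = \<delta> * real j / (real j + 1)"

lemma twist_offset_zero [simp]: "twist_offset \<delta> 0 = 0"
  by (simp add: twist_offset_def)

lemma twist_offset_bounds: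
  assumes "\<delta> > 0"
  shows "0 \<le> twist_offset \<delta> j" "twist_offset \<delta> j < \<delta>"
  using assms by (simp_all add: twist_offset_def field_simps)

lemma strict_mono_twist_offset:
  assumes "\<delta> > 0"
  shows "strict_mono (twist_offset \<delta>)"
proof (rule strict_monoI)
  fix j k :: nat
  assume "j < k"
  then have "real j / (real j + 1) < real k / (real k + 1)"
    by (simp add: field_simps)
  then have "\<delta> * (real j / (real j + 1)) < \<delta> * (real k / (real k + 1))"
    by (rule mult_strict_left_mono[OF _ assms])
  then show "twist_offset \<delta> j < twist_offset \<delta> k" by (simp add: twist_offset_def)
qed

definition arrow_pair :: "real \<Rightarrow> arrow \<Rightarrow> real \<times> real \<times> real \<times> real" where
  "arrow_pair \<delta> c = (let x = min (tl_of c) (hd_of c); y = max (tl_of c) (hd_of c)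
     in (x - \<delta>, x + \<delta>, y - \<delta>, y + \<delta>))"

text \<open>The direction is chosen so that the configuration at \<open>pm (sg_of c)\<close> points like c.\<close>

definition twist_direction :: "arrow \<Rightarrow> bool" where
  "twist_direction c \<longleftrightarrow> (sg_of c \<longleftrightarrow> tl_of c < hd_of c)"

definition arrow_twist :: "real \<Rightarrow> arrow \<Rightarrow> int \<Rightarrow> gd" where
  "arrow_twist \<delta> c k = (\<lambda>j.
     let x = min (tl_of c) (hd_of c) + twist_offset \<delta> j;
         y = max (tl_of c) (hd_of c) + twist_offset \<delta> j;
         right = (if k \<ge> 0 then twist_direction c else \<not> twist_direction c)
     in if right then (x, y, k \<ge> 0) else (y, x, k \<ge> 0)) ` {..<nat \<bar>k\<bar>}"

lemma twist_config_arrow_twist: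
  assumes "\<delta> > 0"
  shows "twist_config True (twist_direction c) (arrow_pair \<delta> c) k (arrow_twist \<delta> c k)"
proof -
  let ?x = "min (tl_of c) (hd_of c)" and ?y = "max (tl_of c) (hd_of c)"
  have mono: "strict_mono_on A (\<lambda>j. u + twist_offset \<delta> j)" for A u
    using strict_mono_twist_offset[OF assms] by (simp add: strict_mono_on_def strict_mono_def)
  have offset_range: "- \<delta> < twist_offset \<delta> j" "twist_offset \<delta> j < \<delta>" for j
    using twist_offset_bounds[OF assms, of j] assms by linarith+
  have "twist_config True (twist_direction c) (?x - \<delta>, ?x + \<delta>, ?y - \<delta>, ?y + \<delta>) k
          (arrow_twist \<delta> c k)"
    unfolding twist_config_def prod.case
    by (rule exI[of _ "\<lambda>j. ?x + twist_offset \<delta> j"], rule exI[of _ "\<lambda>j. ?y + twist_offset \<delta> j"])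
      (auto simp: mono offset_range arrow_twist_def Let_def)
  then show ?thesis by (simp add: arrow_pair_def Let_def)
qed

lemma arrow_twist_zero [simp]: "arrow_twist \<delta> c 0 = {}"
  by (simp add: arrow_twist_def)

lemma arrow_twist_sign:
  assumes "tl_of c \<noteq> hd_of c"
  shows "arrow_twist \<delta> c (pm (sg_of c)) = {c}"
proof -
  obtain t h s where c: "c = (t, h, s)" by (cases c)
  have "t \<noteq> h" using assms by (simp add: c tl_of_def hd_of_def)
  then show ?thesis
    by (cases s; cases "t < h")
      (auto simp: c arrow_twist_def twist_direction_def pm_def tl_of_def hd_of_def sg_of_def)
qed

lemma pairset_arrow_pair:
  "pairset (arrow_pair \<delta> c) = {p. \<exists>e\<in>{tl_of c, hd_of c}. \<bar>p - e\<bar> < \<delta>}"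
  by (auto simp: pairset_def arrow_pair_def Let_def min_def max_def abs_less_iff)

lemma tl_of_arrow_twist:
  assumes "\<delta> > 0" "c' \<in> arrow_twist \<delta> c k"
  shows "tl_of c' \<in> pairset (arrow_pair \<delta> c)"
  using assms twist_offset_bounds[OF assms(1)]
  by (auto simp: pairset_arrow_pair arrow_twist_def Let_def tl_of_def min_def max_def)

definition separated_by :: "real \<Rightarrow> real set \<Rightarrow> bool" where
  "separated_by \<delta> E \<longleftrightarrow> (\<forall>p\<in>E. \<forall>q\<in>E. p \<noteq> q \<longrightarrow> 2 * \<delta> \<le> \<bar>p - q\<bar>)"

lemma finite_imp_separated_by:
  assumes "finite E"
  shows "\<exists>\<delta>>0. separated_by \<delta> E"
proof -
  define gaps where "gaps = (\<lambda>(p, q). \<bar>p - q\<bar>) ` {(p, q) \<in> E \<times> E. p \<noteq> q}"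
  have fin: "finite gaps" unfolding gaps_def
    by (rule finite_imageI, rule finite_subset[of _ "E \<times> E"]) (use assms in auto)
  define \<delta> where "\<delta> = Min (insert 1 gaps) / 2"
  have "\<delta> > 0" using fin by (auto simp: \<delta>_def gaps_def)
  moreover have "separated_by \<delta> E"
    unfolding separated_by_def \<delta>_def using fin by (auto intro!: Min_le simp: gaps_def)
  ultimately show ?thesis by blast
qed

lemma pairset_arrow_pair_disjoint:
  assumes "wf_gd D" "separated_by \<delta> (ends D)" "c \<in> D" "c' \<in> D" "c \<noteq> c'"
  shows "pairset (arrow_pair \<delta> c) \<inter> pairset (arrow_pair \<delta> c') = {}"
proof (rule ccontr)
  assume "pairset (arrow_pair \<delta> c) \<inter> pairset (arrow_pair \<delta> c') \<noteq> {}"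
  then obtain p e e' where e: "e \<in> {tl_of c, hd_of c}" "\<bar>p - e\<bar> < \<delta>"
    and e': "e' \<in> {tl_of c', hd_of c'}" "\<bar>p - e'\<bar> < \<delta>"
    by (auto simp: pairset_arrow_pair)
  have "e \<noteq> e'" using assms(1,3-5) e(1) e'(1) by (auto simp: wf_gd_def)
  moreover have "e \<in> ends D" "e' \<in> ends D"
    using assms(3,4) e(1) e'(1) by (auto simp: ends_def)
  ultimately have "2 * \<delta> \<le> \<bar>e - e'\<bar>" using assms(2) by (simp add: separated_by_def)
  then show False using e(2) e'(2) by linarith
qed

lemma arrow_twist_apart:
  assumes "wf_gd D" "separated_by \<delta> (ends D)" "\<delta> > 0" "c \<in> D" "c' \<in> D" "c \<noteq> c'"
  shows "c \<notin> arrow_twist \<delta> c' k"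
proof
  assume "c \<in> arrow_twist \<delta> c' k"
  then have "tl_of c \<in> pairset (arrow_pair \<delta> c')" by (rule tl_of_arrow_twist[OF assms(3)])
  moreover have "tl_of c \<in> pairset (arrow_pair \<delta> c)"
    using assms(3) by (simp add: pairset_arrow_pair)
  ultimately show False using pairset_arrow_pair_disjoint[OF assms(1,2,4-6)] by blast
qed

lemma arrow_pair_proper:
  assumes "wf_gd D" "separated_by \<delta> (ends D)" "\<delta> > 0" "c \<in> D"
  shows "case arrow_pair \<delta> c of (l, r, l', r') \<Rightarrow> l < r \<and> r \<le> l' \<and> l' < r'"
proof -
  have "tl_of c \<noteq> hd_of c" "tl_of c \<in> ends D" "hd_of c \<in> ends D"
    using assms(1,4) by (auto simp: wf_gd_def ends_def)
  then have "2 * \<delta> \<le> \<bar>tl_of c - hd_of c\<bar>" using assms(2) by (simp add: separated_by_def)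
  then show ?thesis using assms(3) by (auto simp: arrow_pair_def Let_def min_def max_def)
qed

lemma is_ftl_arrow_twists:
  assumes "wf_gd D" "bij_betw d {..<m} D" "separated_by \<delta> (ends D)" "\<delta> > 0"
  shows "is_ftl m (\<lambda>k. \<Union>i<m. arrow_twist \<delta> (d i) (k i))"
  unfolding is_ftl_def
proof (rule exI[of _ "{}"], rule exI[of _ "\<lambda>i. arrow_pair \<delta> (d i)"], rule exI[of _ "\<lambda>_. True"],
    rule exI[of _ "\<lambda>i. twist_direction (d i)"], intro conjI allI impI)
  have d: "d i \<in> D" if "i < m" for i using assms(2) that by (auto simp: bij_betw_def)
  show "wf_gd {}" by (simp add: wf_gd_def)
  show "case arrow_pair \<delta> (d i) of (l, r, l', r') \<Rightarrow> l < r \<and> r \<le> l' \<and> l' < r'"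
    if "i < m" for i
    by (rule arrow_pair_proper[OF assms(1,3,4) d[OF that]])
  show "pairset (arrow_pair \<delta> (d i)) \<inter> pairset (arrow_pair \<delta> (d j)) = {}"
    if "i < m" "j < m" "i \<noteq> j" for i j
    using pairset_arrow_pair_disjoint[OF assms(1,3) d d] assms(2) that
    by (auto simp: bij_betw_def dest: inj_onD)
  show "ends {} \<inter> pairset (arrow_pair \<delta> (d i)) = {}" for i by (simp add: ends_def)
  show "\<exists>C. (\<forall>i<m. twist_config True (twist_direction (d i)) (arrow_pair \<delta> (d i)) (k i) (C i)) \<and>
      (\<Union>i<m. arrow_twist \<delta> (d i) (k i)) = {} \<union> (\<Union>i<m. C i)" for k
    by (rule exI[of _ "\<lambda>i. arrow_twist \<delta> (d i) (k i)"]) (simp add: twist_config_arrow_twist[OF assms(4)])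
qed

theorem lemma6:
  fixes D :: gd and m :: nat
  assumes "wf_gd D" and "card D = m" and "m > 0"
  shows "\<exists>Phi alpha nu. is_ftl m Phi \<and>
     polyak_eq (Imap (dpart m nu alpha (\<lambda>z. gen (Phi z)) (\<lambda>_. 0)))
               (\<lambda>E. (-1::int) ^ card {a\<in>D. \<not> sg_of a} * gen D E)"
proof -
  have finD: "finite D" using assms(1) by (simp add: wf_gd_def)
  obtain d where d: "bij_betw d {..<m} D"
    using ex_bij_betw_nat_finite[OF finD] assms(2) by (auto simp: atLeast0LessThan)
  obtain \<delta> where \<delta>: "\<delta> > 0" "separated_by \<delta> (ends D)"
    using finite_imp_separated_by[of "ends D"] finD by (auto simp: ends_def)
  define Phi where "Phi = (\<lambda>k. \<Union>i<m. arrow_twist \<delta> (d i) (k i))"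
  have dD: "d i \<in> D" if "i < m" for i using d that by (auto simp: bij_betw_def)
  have "Imap (dpart m (\<lambda>i. sg_of (d i)) (\<lambda>_. 1) (\<lambda>z. gen (Phi z)) (\<lambda>_. 0))
      = (\<lambda>E. (\<Prod>i<m. pm (sg_of (d i))) * gen (d ` {..<m}) E)"
    unfolding Phi_def
  proof (rule Imap_dpart_unit_steps)
    show "arrow_twist \<delta> (d i) (pm (sg_of (d i))) = {d i}" if "i < m" for i
      using assms(1) dD[OF that] by (intro arrow_twist_sign) (auto simp: wf_gd_def)
    show "d i \<notin> arrow_twist \<delta> (d j) k" if "i < m" "j < m" "i \<noteq> j" for i j k
      using arrow_twist_apart[OF assms(1) \<delta>(2,1) dD dD] d that
      by (auto simp: bij_betw_def dest: inj_onD)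
  qed simp
  also have "\<dots> = (\<lambda>E. (-1) ^ card {a\<in>D. \<not> sg_of a} * gen D E)"
    using prod.reindex_bij_betw[OF d, of "\<lambda>a. pm (sg_of a)"] prod_pm_eq_power[OF finD] d
    by (simp add: bij_betw_def)
  finally have "polyak_eq (Imap (dpart m (\<lambda>i. sg_of (d i)) (\<lambda>_. 1) (\<lambda>z. gen (Phi z)) (\<lambda>_. 0)))
      (\<lambda>E. (-1) ^ card {a\<in>D. \<not> sg_of a} * gen D E)"
    by (simp add: polyak_eq_def prel.zero)
  moreover have "is_ftl m Phi"
    unfolding Phi_def by (rule is_ftl_arrow_twists[OF assms(1) d \<delta>(2,1)])
  ultimately show ?thesis by blast
qed

end
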